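(* For $n=0,1,2,\ldots$ let $R_n=\sum_{k=0}^n\binom{n}{k}\binom{n+k}{k}\frac{1}{2k-1}$. Then $\lim_{n\to\infty}\frac{\sqrt[n+1]{R_{n+1}}}{\sqrt[n]{R_n}}=1$. *)

theory Defs
  imports "HOL-Analysis.Analysis"
begin

definition R :: "nat \<Rightarrow> real" where
  "R n = (\<Sum>k=0..n. real (n choose k) * real ((n + k) choose k) * (1 / (2 * real k - 1)))"

end

theory Submission
  imports Defs "HOL-Real_Asymp.Real_Asymp"
begin

text \<open>
  Only the term \<open>k = 0\<close> of \<open>R n\<close> is negative (it equals \<open>-1\<close>); the others are nonnegative and
  grow with \<open>n\<close>, so \<open>R\<close> is increasing with \<open>R 1 = 1\<close>. Comparing terms, one finds
  \<open>R (n + 1) \<le> (4 n + 10) R n\<close>. Hence \<open>r n = ln (R n)\<close> is increasing with increments at most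
  \<open>ln (4 n + 10) = o(n)\<close>, which forces \<open>r (n + 1) / (n + 1) - r n / n \<rightarrow> 0\<close>; exponentiating gives
  the claim.
\<close>

definition R_term :: "nat \<Rightarrow> nat \<Rightarrow> real" where
  "R_term n k = real (n choose k) * real ((n + k) choose k) / (2 * real k - 1)"

lemma R_eq_sum_R_term: "R n = -1 + (\<Sum>k=1..n. R_term n k)"
  unfolding R_def R_term_def by (simp add: sum.atLeast_Suc_atMost)

lemma R_term_nonneg: "k \<ge> 1 \<Longrightarrow> 0 \<le> R_term n k"
  unfolding R_term_def by simp

lemma R_term_mono: "k \<ge> 1 \<Longrightarrow> R_term n k \<le> R_term (Suc n) k"
  unfolding R_term_def
  by (intro divide_right_mono mult_mono) (auto intro: binomial_right_mono)

lemma R_term_Suc_ratio: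
  "R_term (Suc n) k * real (Suc n - k) = R_term n k * real (Suc n + k)"
proof -
  have first: "real (Suc n - k) * real (Suc n choose k) = real (Suc n) * real (n choose k)"
    using binomial_absorb_comp[of "Suc n" k] by (metis diff_Suc_1 of_nat_mult)
  have "(Suc n + k - k) * (Suc n + k choose k) = (Suc n + k) * ((Suc n + k - 1) choose k)"
    by (rule binomial_absorb_comp)
  then have second:
    "real (Suc n) * real (Suc n + k choose k) = real (Suc n + k) * real (n + k choose k)"
    by (metis add_diff_cancel_right' diff_Suc_1 of_nat_mult plus_nat.simps(2))
  have "R_term (Suc n) k * real (Suc n - k) * real (Suc n)
      = (real (Suc n - k) * real (Suc n choose k)) * (real (Suc n) * real (Suc n + k choose k))
          / (2 * real k - 1)"
    unfolding R_term_def by (simp add: mult_ac)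
  also have "\<dots> = (real (Suc n) * real (n choose k)) * (real (Suc n + k) * real (n + k choose k))
          / (2 * real k - 1)"
    by (simp only: first second)
  also have "\<dots> = R_term n k * real (Suc n + k) * real (Suc n)"
    unfolding R_term_def by (simp add: mult_ac)
  finally show ?thesis by simp
qed

lemma R_term_Suc_le:
  assumes "1 \<le> k" "k \<le> n"
  shows "R_term (Suc n) k \<le> (2 * real n + 1) * R_term n k"
proof -
  have "R_term (Suc n) k \<le> R_term (Suc n) k * real (Suc n - k)"
    using assms R_term_nonneg[of k "Suc n"] by (simp add: mult_le_cancel_left1)
  also have "\<dots> = R_term n k * real (Suc n + k)"
    by (rule R_term_Suc_ratio)
  also have "\<dots> \<le> R_term n k * (2 * real n + 1)"
    using assms R_term_nonneg[of k n] by (intro mult_left_mono) auto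
  finally show ?thesis by (simp add: mult.commute)
qed

lemma central_binomial_Suc_le: "(2 * n + 2 choose (n + 1)) \<le> 4 * (2 * n choose n)"
proof -
  have max: "2 * n choose k \<le> 2 * n choose n" for k
    by (rule binomial_maximum')
  have left: "2 * n + 1 choose n \<le> 2 * (2 * n choose n)"
  proof (cases n)
    case (Suc m)
    then have "2 * n + 1 choose n = (2 * n choose m) + (2 * n choose n)"
      using binomial_Suc_Suc[of "2 * n" m] by simp
    then show ?thesis
      using max[of m] by simp
  qed simp
  have "2 * n + 2 choose (n + 1) = (2 * n + 1 choose n) + (2 * n + 1 choose (n + 1))"
    using binomial_Suc_Suc[of "2 * n + 1" n] by simp
  also have "2 * n + 1 choose (n + 1) = (2 * n choose n) + (2 * n choose (n + 1))"
    using binomial_Suc_Suc[of "2 * n" n] by simp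
  finally show ?thesis
    using left max[of "n + 1"] by simp
qed

(* For k = n + 1 the ratio identity degenerates to 0 = 0, so the new diagonal term is
   compared with the old one through the central binomial coefficients. *)
lemma R_term_diagonal_Suc_le:
  assumes "n \<ge> 1"
  shows "R_term (Suc n) (Suc n) \<le> 4 * R_term n n"
proof -
  have central: "real (2 * n + 2 choose (n + 1)) \<le> 4 * real (2 * n choose n)"
    using central_binomial_Suc_le[of n] by (metis of_nat_le_iff of_nat_mult of_nat_numeral)
  have double_Suc: "Suc n + Suc n = 2 * n + 2" and double: "n + n = 2 * n"
    by simp_all
  have "R_term (Suc n) (Suc n) = real (2 * n + 2 choose (n + 1)) / (2 * real (Suc n) - 1)"
    unfolding R_term_def binomial_n_n double_Suc by (simp del: binomial_Suc_Suc)
  moreover have "R_term n n = real (2 * n choose n) / (2 * real n - 1)"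
    unfolding R_term_def binomial_n_n double by simp
  moreover have "real (2 * n + 2 choose (n + 1)) / (2 * real (Suc n) - 1)
      \<le> 4 * real (2 * n choose n) / (2 * real n - 1)"
    using assms central by (intro frac_le) auto
  ultimately show ?thesis by simp
qed

lemma R_mono: "R n \<le> R (Suc n)"
proof -
  have "(\<Sum>k=1..n. R_term n k) \<le> (\<Sum>k=1..n. R_term (Suc n) k)"
    by (intro sum_mono R_term_mono) auto
  also have "\<dots> \<le> (\<Sum>k=1..Suc n. R_term (Suc n) k)"
    using R_term_nonneg[of "Suc n" "Suc n"] by simp
  finally show ?thesis
    unfolding R_eq_sum_R_term by simp
qed

lemma R_one: "R 1 = 1"
  unfolding R_def by simp

lemma R_ge_one: "n \<ge> 1 \<Longrightarrow> R n \<ge> 1"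
proof (induction n rule: dec_induct)
  case (step m)
  then show ?case using R_mono[of m] by simp
qed (use R_one in simp)

lemma R_Suc_le:
  assumes "n \<ge> 1"
  shows "R (Suc n) \<le> (4 * real n + 10) * R n"
proof -
  let ?S = "\<Sum>k=1..n. R_term n k"
  have S_eq: "?S = R n + 1"
    using R_eq_sum_R_term by simp
  have diagonal: "R_term n n \<le> ?S"
    using assms by (intro member_le_sum R_term_nonneg) auto
  have "(\<Sum>k=1..n. R_term (Suc n) k) \<le> (\<Sum>k=1..n. (2 * real n + 1) * R_term n k)"
    by (intro sum_mono R_term_Suc_le) auto
  then have off_diagonal: "(\<Sum>k=1..n. R_term (Suc n) k) \<le> (2 * real n + 1) * ?S"
    by (simp add: sum_distrib_left)
  have "R (Suc n) = -1 + (\<Sum>k=1..n. R_term (Suc n) k) + R_term (Suc n) (Suc n)"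
    unfolding R_eq_sum_R_term by simp
  also have "\<dots> \<le> -1 + (2 * real n + 1) * ?S + 4 * ?S"
    using off_diagonal R_term_diagonal_Suc_le[OF assms] diagonal by linarith
  also have "\<dots> \<le> (2 * real n + 5) * (R n + 1)"
    unfolding S_eq by (simp add: algebra_simps)
  also have "\<dots> \<le> (2 * real n + 5) * (2 * R n)"
    using R_ge_one[OF assms] by (intro mult_left_mono) auto
  finally show ?thesis by (simp add: algebra_simps)
qed

lemma slope_Suc_minus_slope_tendsto_0:
  fixes r L :: "nat \<Rightarrow> real"
  assumes incr: "\<And>n. n \<ge> 1 \<Longrightarrow> r n \<le> r (Suc n)"
    and increment: "\<And>n. n \<ge> 1 \<Longrightarrow> r (Suc n) \<le> r n + L n"
    and "incseq L" and "0 \<le> r 1"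
    and L_sublinear: "(\<lambda>n. L n / n) \<longlonglongrightarrow> 0"
  shows "(\<lambda>n. r (Suc n) / Suc n - r n / n) \<longlonglongrightarrow> 0"
proof (rule Lim_null_comparison)
  have L_nonneg: "n \<ge> 1 \<Longrightarrow> 0 \<le> L n" for n
    using incr increment by fastforce
  have r_nonneg: "n \<ge> 1 \<Longrightarrow> 0 \<le> r n" for n
    by (induction n rule: dec_induct) (use \<open>0 \<le> r 1\<close> incr in \<open>auto intro: order_trans\<close>)
  have r_le: "n \<ge> 1 \<Longrightarrow> r n \<le> r 1 + n * L n" for n
  proof (induction n rule: dec_induct)
    case (step m)
    have "L m \<le> L (Suc m)"
      using \<open>incseq L\<close> by (rule incseq_SucD)
    then have "(m + 1) * L m \<le> (m + 1) * L (Suc m)"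
      by (simp add: mult_left_mono)
    then show ?case
      using step.IH increment[OF step.hyps(1)] by (simp add: algebra_simps)
  qed (use L_nonneg in simp)
  show "\<forall>\<^sub>F n in sequentially.
      norm (r (Suc n) / Suc n - r n / n) \<le> 2 * (L n / n) + r 1 / n"
  proof (rule eventually_sequentiallyI)
    fix n :: nat
    assume n: "n \<ge> 1"
    then have n_pos: "real n > 0" by simp
    define A where "A = (r (Suc n) - r n) / (real n + 1)"
    define B where "B = r n / (real n * (real n + 1))"
    have "r (Suc n) / Suc n - r n / n = A - B"
      using n_pos unfolding A_def B_def of_nat_Suc
      by (simp add: divide_simps) (simp add: algebra_simps)
    moreover have "0 \<le> A"
      using incr[OF n] unfolding A_def by simp
    moreover have "A \<le> L n / n"
      unfolding A_def using n_pos increment[OF n] L_nonneg[OF n] by (intro frac_le) auto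
    moreover have "0 \<le> B"
      using r_nonneg[OF n] unfolding B_def by simp
    moreover have "B \<le> L n / n + r 1 / n"
    proof -
      have "B \<le> (r 1 + n * L n) / (real n * (real n + 1))"
        using r_le[OF n] unfolding B_def by (simp add: divide_right_mono)
      also have "\<dots> = r 1 / (real n * (real n + 1)) + L n / (real n + 1)"
        using n_pos by (simp add: divide_simps)
      also have "\<dots> \<le> r 1 / n + L n / n"
        using n_pos \<open>0 \<le> r 1\<close> L_nonneg[OF n] by (intro add_mono frac_le) auto
      finally show ?thesis by simp
    qed
    ultimately show "norm (r (Suc n) / Suc n - r n / n) \<le> 2 * (L n / n) + r 1 / n"
      by simp
  qed
  show "(\<lambda>n. 2 * (L n / n) + r 1 / n) \<longlonglongrightarrow> 0"
    using tendsto_add[OF tendsto_mult_right_zero[OF L_sublinear]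
        tendsto_mult_right_zero[OF lim_inverse_n']]
    by simp
qed

lemma root_ratio_tendsto_1:
  fixes a :: "nat \<Rightarrow> real"
  assumes pos: "\<And>n. n \<ge> 1 \<Longrightarrow> 0 < a n"
    and "(\<lambda>n. ln (a (Suc n)) / Suc n - ln (a n) / n) \<longlonglongrightarrow> 0"
  shows "(\<lambda>n. root (n + 1) (a (n + 1)) / root n (a n)) \<longlonglongrightarrow> 1"
proof -
  have root_eq: "root n (a n) = exp (ln (a n) / n)" if "n \<ge> 1" for n
    using that pos[OF that] by (metis exp_ln ln_root real_root_gt_zero zero_less_one less_le_trans)
  have "(\<lambda>n. exp (ln (a (Suc n)) / Suc n - ln (a n) / n)) \<longlonglongrightarrow> 1"
    using tendsto_exp[OF assms(2)] by simp
  then show ?thesis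
    by (rule Lim_transform_eventually)
       (auto simp: eventually_sequentially root_eq exp_diff intro!: exI[of _ 1])
qed

theorem theorem4p4:
  shows "(\<lambda>n. root (n + 1) (R (n + 1)) / root n (R n)) \<longlonglongrightarrow> 1"
proof (rule root_ratio_tendsto_1)
  show "n \<ge> 1 \<Longrightarrow> 0 < R n" for n
    using R_ge_one[of n] by simp
  show "(\<lambda>n. ln (R (Suc n)) / Suc n - ln (R n) / n) \<longlonglongrightarrow> 0"
  proof (rule slope_Suc_minus_slope_tendsto_0[where L = "\<lambda>n. ln (4 * real n + 10)"])
    fix n :: nat
    assume n: "n \<ge> 1"
    have pos: "0 < R n" "0 < R (Suc n)"
      using R_ge_one[OF n] R_ge_one[of "Suc n"] by simp_all
    then show "ln (R n) \<le> ln (R (Suc n))"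
      using R_mono[of n] by simp
    have "ln (R (Suc n)) \<le> ln ((4 * real n + 10) * R n)"
      using pos R_Suc_le[OF n] by simp
    then show "ln (R (Suc n)) \<le> ln (R n) + ln (4 * real n + 10)"
      using pos by (simp add: ln_mult)
  next
    show "incseq (\<lambda>n. ln (4 * real n + 10))"
      by (simp add: incseq_def)
    show "0 \<le> ln (R 1)"
      using R_one by simp
    show "(\<lambda>n. ln (4 * real n + 10) / real n) \<longlonglongrightarrow> 0"
      by real_asymp
  qed
qed

end
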